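(* Let $A(x)=\sum_{i=0}^d a_ix^i\in\mathbb{Z}[x]$ have degree $d\ge1$ with $a_0\neq0$, let $m>d$, and let $N=(N_{i,j})$ be the $d\times m$ rational matrix with $N_{i,j}=\delta_{ij}$ for $1\le i,j\le d$ and whose rows are linear recurrences determined by $A$ (i.e. $\sum_{k=0}^d a_kN_{i,j+k}=0$ for $1\le j\le m-d$). Let $p$ be a prime and let $w$ be the abscissa of a vertex of the $p$-adic Newton polygon of $A$. Then the $d\times d$ submatrix of $N$ formed by the columns $1,2,\dots,w,\ m-d+w+1,\dots,m$ is nonsingular. Equivalently, the $(m-d)\times(m-d)$ matrix $U=(a_{w+i-j})_{1\le i,j\le m-d}$ (with $a_k=0$ for $k<0$ or $k>d$) is nonsingular.
   Context: The $p$-adic Newton polygon of $A$ is the lower boundary of the convex hull of the points $(i,v_p(a_i))$, $0\le i\le d$, where $v_p$ is the $p$-adic valuation; its vertices have abscissae $0=w_0<w_1<\dots<w_r=d$. *)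

theory Defs
  imports "Jordan_Normal_Form.Determinant" "HOL-Computational_Algebra.Computational_Algebra"
begin

text \<open>p-adic valuation of the coefficients: v_p(a) = multiplicity p a (for a nonzero).
  The p-adic Newton polygon of A is the lower boundary of the convex hull of the points
  (i, v_p(a_i)) with a_i nonzero. An abscissa w is the abscissa of a vertex of this lower
  boundary iff a_w is nonzero and the point (w, v_p(a_w)) is strictly supported from below
  by a line, i.e. all other points lie strictly above some line through it.\<close>

definition newton_vertex :: "nat \<Rightarrow> int poly \<Rightarrow> nat \<Rightarrow> bool" where
  "newton_vertex p A w \<longleftrightarrow>
     w \<le> degree A \<and> coeff A w \<noteq> 0 \<and>
     (\<exists>s::real. \<forall>j \<le> degree A. coeff A j \<noteq> 0 \<and> j \<noteq> w \<longrightarrow>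
        real (multiplicity (int p) (coeff A j)) >
        real (multiplicity (int p) (coeff A w)) + s * (real j - real w))"

end

theory Submission imports Defs begin

text \<open>Every term of the Leibniz expansion of \<open>U = (a (w + i - j))\<close> other than the diagonal
  \<open>a w ^ n\<close> is a product of coefficients whose indices average to \<open>w\<close>. Because \<open>(w, v\<^sub>p (a w))\<close>
  is a vertex of the Newton polygon, a supporting line through it shows that such a product has
  valuation larger than \<open>n v\<^sub>p (a w)\<close>, so \<open>det U\<close> is \<open>a w ^ n \<noteq> 0\<close> modulo a higher power of \<open>p\<close>.
  For the submatrix of \<open>N\<close>, a vector \<open>v\<close> in its left kernel yields the row \<open>x = v N\<close>, a solution
  of the recurrence vanishing at the chosen columns; the remaining entries of \<open>x\<close> are then
  annihilated by \<open>U\<^sup>T\<close>, so \<open>x = 0\<close>, and hence so is \<open>v\<close>, the first \<open>d\<close> entries of \<open>x\<close>.\<close>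

lemma det_ne_zero_if_diagonal_term_multiplicity_least:
  fixes M :: "'a :: {factorial_semiring, comm_ring_1} mat"
  assumes M: "M \<in> carrier_mat n n" and P: "prime_elem P"
    and diag: "(\<Prod>i = 0..<n. M $$ (i, i)) \<noteq> 0"
    and off_diag: "\<And>\<sigma>. \<sigma> permutes {0..<n} \<Longrightarrow> \<sigma> \<noteq> id \<Longrightarrow> (\<Prod>i = 0..<n. M $$ (i, \<sigma> i)) \<noteq> 0 \<Longrightarrow>
        multiplicity P (\<Prod>i = 0..<n. M $$ (i, i)) < multiplicity P (\<Prod>i = 0..<n. M $$ (i, \<sigma> i))"
  shows "det M \<noteq> 0"
proof
  assume det0: "det M = 0"
  define e where "e = multiplicity P (\<Prod>i = 0..<n. M $$ (i, i))"
  define S where "S = {\<sigma>. \<sigma> permutes {0..<n}}"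
  define R where "R = (\<Sum>\<sigma> \<in> S - {id}. signof \<sigma> * (\<Prod>i = 0..<n. M $$ (i, \<sigma> i)))"
  have "det M = (\<Prod>i = 0..<n. M $$ (i, i)) + R"
    unfolding det_def'[OF M] R_def S_def
    by (subst sum.remove[of _ id]) (simp_all add: finite_permutations permutes_id)
  with det0 have diag_eq: "(\<Prod>i = 0..<n. M $$ (i, i)) = - R"
    by (simp add: eq_neg_iff_add_eq_0)
  have "P ^ Suc e dvd (\<Prod>i = 0..<n. M $$ (i, \<sigma> i))" if "\<sigma> \<in> S - {id}" for \<sigma>
  proof (cases "(\<Prod>i = 0..<n. M $$ (i, \<sigma> i)) = 0")
    case False
    then show ?thesis
      using off_diag[of \<sigma>] that by (intro multiplicity_dvd') (auto simp: S_def e_def)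
  qed (simp only: dvd_0_right)
  then have "P ^ Suc e dvd R"
    unfolding R_def by (intro dvd_sum dvd_mult) auto
  then have "P ^ Suc e dvd (\<Prod>i = 0..<n. M $$ (i, i))"
    by (simp add: diag_eq)
  then have "Suc e \<le> e"
    unfolding e_def using P diag by (intro multiplicity_geI) (auto simp: prime_elem_def)
  then show False by simp
qed

lemma newton_vertex_multiplicity_sum_gt:
  assumes vertex: "newton_vertex p A w" and I: "finite I"
    and nz: "\<And>i. i \<in> I \<Longrightarrow> coeff A (k i) \<noteq> 0"
    and barycentre: "(\<Sum>i\<in>I. real (k i)) = real (card I) * real w"
    and "i0 \<in> I" "k i0 \<noteq> w"
  shows "card I * multiplicity (int p) (coeff A w) < (\<Sum>i\<in>I. multiplicity (int p) (coeff A (k i)))"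
proof -
  define e where "e = multiplicity (int p) (coeff A w)"
  obtain s :: real where s: "\<And>j. j \<le> degree A \<Longrightarrow> coeff A j \<noteq> 0 \<Longrightarrow> j \<noteq> w \<Longrightarrow>
      real e + s * (real j - real w) < real (multiplicity (int p) (coeff A j))"
    using vertex unfolding newton_vertex_def e_def by blast
  have below: "real e + s * (real (k i) - real w) \<le> real (multiplicity (int p) (coeff A (k i)))"
    if "i \<in> I" for i
    using s[of "k i"] nz[OF that] le_degree[of A "k i"] by (cases "k i = w") (auto simp: e_def)
  have "(\<Sum>i\<in>I. real e + s * (real (k i) - real w)) = real (card I * e)"
    using barycentre by (simp add: sum.distrib sum_subtractf sum_distrib_left[symmetric] algebra_simps)
  moreover have "(\<Sum>i\<in>I. real e + s * (real (k i) - real w))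
      < (\<Sum>i\<in>I. real (multiplicity (int p) (coeff A (k i))))"
    using s[of "k i0"] nz[of i0] le_degree[of A "k i0"] assms(5,6) below I
    by (intro sum_strict_mono_ex1) auto
  ultimately show ?thesis
    unfolding e_def by (simp only: of_nat_sum[symmetric] of_nat_less_iff)
qed

definition coeff_toeplitz_mat :: "'a :: zero poly \<Rightarrow> nat \<Rightarrow> nat \<Rightarrow> 'a mat" where
  "coeff_toeplitz_mat A w n = mat n n (\<lambda>(i, j).
     if int w + int i - int j \<ge> 0 then coeff A (nat (int w + int i - int j)) else 0)"

lemma coeff_toeplitz_mat_dim [simp]:
  "dim_row (coeff_toeplitz_mat A w n) = n" "dim_col (coeff_toeplitz_mat A w n) = n"
  by (simp_all add: coeff_toeplitz_mat_def)

lemma coeff_toeplitz_mat_carrier [simp]: "coeff_toeplitz_mat A w n \<in> carrier_mat n n"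
  by (simp add: carrier_matI)

lemma coeff_toeplitz_mat_index [simp]:
  "i < n \<Longrightarrow> j < n \<Longrightarrow> coeff_toeplitz_mat A w n $$ (i, j) = (if j \<le> w + i then coeff A (w + i - j) else 0)"
  by (auto simp: coeff_toeplitz_mat_def nat_diff_distrib nat_add_distrib)

lemma coeff_toeplitz_mat_map_poly:
  "f 0 = 0 \<Longrightarrow> coeff_toeplitz_mat (map_poly f A) w n = map_mat f (coeff_toeplitz_mat A w n)"
  by (rule eq_matI) (simp_all add: coeff_map_poly)

lemma det_coeff_toeplitz_mat_ne_zero:
  fixes A :: "int poly"
  assumes p: "prime p" and vertex: "newton_vertex p A w"
  shows "det (coeff_toeplitz_mat A w n) \<noteq> 0"
proof -
  let ?M = "coeff_toeplitz_mat A w n"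
  have aw: "coeff A w \<noteq> 0" using vertex by (simp add: newton_vertex_def)
  have P: "prime_elem (int p)" using p by simp
  show ?thesis
  proof (rule det_ne_zero_if_diagonal_term_multiplicity_least[OF _ P])
    fix \<sigma> assume \<sigma>: "\<sigma> permutes {0..<n}" "\<sigma> \<noteq> id" and nz: "(\<Prod>i = 0..<n. ?M $$ (i, \<sigma> i)) \<noteq> 0"
    define k where "k i = w + i - \<sigma> i" for i
    have \<sigma>_lt: "\<sigma> i < n" if "i < n" for i using \<sigma>(1) that by (auto dest: permutes_in_image)
    have entry: "\<sigma> i \<le> w + i \<and> ?M $$ (i, \<sigma> i) = coeff A (k i) \<and> coeff A (k i) \<noteq> 0" if "i < n" for i
    proof -
      have "?M $$ (i, \<sigma> i) \<noteq> 0" using nz that by auto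
      then show ?thesis using that \<sigma>_lt[OF that] by (auto simp: k_def split: if_splits)
    qed
    have "(\<Sum>i = 0..<n. real (k i)) = (\<Sum>i = 0..<n. real w + real i - real (\<sigma> i))"
      using entry by (intro sum.cong) (auto simp: k_def)
    also have "\<dots> = real n * real w"
      using sum.permute[OF \<sigma>(1), of real] by (simp add: sum.distrib sum_subtractf comp_def)
    finally have barycentre: "(\<Sum>i = 0..<n. real (k i)) = real (card {0..<n}) * real w" by simp
    obtain i0 where i0: "i0 < n" "\<sigma> i0 \<noteq> i0"
      using \<sigma> by (metis atLeastLessThan_iff eq_id_iff permutes_def)
    then have "k i0 \<noteq> w" using entry[OF i0(1)] by (auto simp: k_def)
    then have "n * multiplicity (int p) (coeff A w) < (\<Sum>i = 0..<n. multiplicity (int p) (coeff A (k i)))"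
      using newton_vertex_multiplicity_sum_gt[OF vertex _ _ barycentre, of i0] entry i0 by auto
    also have "\<dots> = multiplicity (int p) (\<Prod>i = 0..<n. ?M $$ (i, \<sigma> i))"
      using entry by (simp add: prime_elem_multiplicity_prod_distrib[OF P] image_iff)
    finally show "multiplicity (int p) (\<Prod>i = 0..<n. ?M $$ (i, i)) < multiplicity (int p) (\<Prod>i = 0..<n. ?M $$ (i, \<sigma> i))"
      using P aw by (simp add: prime_elem_multiplicity_power_distrib)
  qed (use aw in simp_all)
qed

lemma recurrence_zero_if_zero_outside_window:
  fixes A :: "'a :: field poly" and x :: "nat \<Rightarrow> 'a"
  assumes U: "det (coeff_toeplitz_mat A w n) \<noteq> 0" and w: "w \<le> degree A"
    and rec: "\<And>j. j < n \<Longrightarrow> (\<Sum>k\<le>degree A. coeff A k * x (j + k)) = 0"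
    and left: "\<And>c. c < w \<Longrightarrow> x c = 0"
    and right: "\<And>c. n + w \<le> c \<Longrightarrow> c < n + degree A \<Longrightarrow> x c = 0"
    and c: "c < n + degree A"
  shows "x c = 0"
proof -
  let ?d = "degree A"
  define y where "y = vec n (\<lambda>l. x (w + l))"
  have "transpose_mat (coeff_toeplitz_mat A w n) *\<^sub>v y = 0\<^sub>v n"
  proof (rule eq_vecI)
    fix j assume "j < dim_vec (0\<^sub>v n :: 'a vec)"
    then have j: "j < n" by simp
    define G where "G c = (if j \<le> c then coeff A (c - j) else 0) * x c" for c
    have "(transpose_mat (coeff_toeplitz_mat A w n) *\<^sub>v y) $ j = (\<Sum>l = 0..<n. G (l + w))"
      using j by (simp add: y_def G_def scalar_prod_def add.commute cong: if_cong)
    also have "\<dots> = (\<Sum>c = w..<n + w. G c)"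
      using sum.shift_bounds_nat_ivl[of G 0 w n] by simp
    also have "\<dots> = (\<Sum>c = 0..<n + ?d. G c)"
      using w left right by (intro sum.mono_neutral_left) (auto simp: G_def)
    also have "\<dots> = (\<Sum>c = j..<Suc ?d + j. G c)"
      using j by (intro sum.mono_neutral_right) (auto simp: G_def coeff_eq_0)
    also have "\<dots> = (\<Sum>k = 0..<Suc ?d. G (k + j))"
      using sum.shift_bounds_nat_ivl[of G 0 j "Suc ?d"] by simp
    also have "\<dots> = (\<Sum>k\<le>?d. coeff A k * x (j + k))"
      by (intro sum.cong) (auto simp: G_def add.commute)
    finally show "(transpose_mat (coeff_toeplitz_mat A w n) *\<^sub>v y) $ j = 0\<^sub>v n $ j"
      using rec[OF j] j by simp
  qed simp
  moreover have "det (transpose_mat (coeff_toeplitz_mat A w n)) \<noteq> 0"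
    using U by (simp add: det_transpose[of _ n])
  ultimately have y: "y = 0\<^sub>v n"
    using det_0_iff_vec_prod_zero_field[of "transpose_mat (coeff_toeplitz_mat A w n)" n]
    by (metis coeff_toeplitz_mat_carrier transpose_carrier_mat vec_carrier y_def)
  show ?thesis
  proof (cases "w \<le> c \<and> c < n + w")
    case True
    then have "y $ (c - w) = 0" by (auto simp: y)
    with True show ?thesis by (auto simp: y_def)
  qed (use c left right in auto)
qed

lemma det_window_columns_ne_zero:
  fixes A :: "'a :: field poly" and N :: "'a mat"
  assumes U: "det (coeff_toeplitz_mat A w (m - d)) \<noteq> 0"
    and d: "degree A = d" and w: "w \<le> d" and m: "d \<le> m"
    and N_id: "\<And>i j. i < d \<Longrightarrow> j < d \<Longrightarrow> N $$ (i, j) = (if i = j then 1 else 0)"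
    and N_rec: "\<And>i j. i < d \<Longrightarrow> j < m - d \<Longrightarrow> (\<Sum>k\<le>d. coeff A k * N $$ (i, j + k)) = 0"
  shows "det (mat d d (\<lambda>(i, j). N $$ (i, if j < w then j else m - d + j))) \<noteq> 0"
proof
  define D where "D = mat d d (\<lambda>(i, j). N $$ (i, if j < w then j else m - d + j))"
  assume "det (mat d d (\<lambda>(i, j). N $$ (i, if j < w then j else m - d + j))) = 0"
  then have "det (transpose_mat D) = 0"
    by (simp add: D_def det_transpose[of _ d])
  then obtain v where v: "v \<in> carrier_vec d" "v \<noteq> 0\<^sub>v d" "transpose_mat D *\<^sub>v v = 0\<^sub>v d"
    using det_0_iff_vec_prod_zero_field[of "transpose_mat D" d] by (auto simp: D_def)
  define x where "x c = (\<Sum>i<d. v $ i * N $$ (i, c))" for c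
  have window: "x (if j < w then j else m - d + j) = 0" if "j < d" for j
  proof -
    have "(transpose_mat D *\<^sub>v v) $ j = 0" using v(3) that by simp
    then show ?thesis
      using that v(1) by (simp add: D_def x_def scalar_prod_def lessThan_atLeast0 mult.commute)
  qed
  have x_zero: "x c = 0" if "c < m" for c
  proof (rule recurrence_zero_if_zero_outside_window[of A w "m - d"])
    show "(\<Sum>k\<le>degree A. coeff A k * x (j + k)) = 0" if "j < m - d" for j
    proof -
      have "(\<Sum>k\<le>d. coeff A k * x (j + k)) = (\<Sum>i<d. v $ i * (\<Sum>k\<le>d. coeff A k * N $$ (i, j + k)))"
        unfolding x_def by (simp add: sum_distrib_left mult_ac sum.swap[of _ "{..d}"])
      then show ?thesis using N_rec that by (simp add: d)
    qed
    show "x c = 0" if "c < w" for c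
      using window[of c] that w by simp
    show "x c = 0" if "m - d + w \<le> c" "c < m - d + degree A" for c
    proof -
      have "c - (m - d) < d" "\<not> c - (m - d) < w" "m - d + (c - (m - d)) = c" using that d m by auto
      then show ?thesis using window[of "c - (m - d)"] by simp
    qed
  qed (use U w d m that in auto)
  have "x c = v $ c" if "c < d" for c
  proof -
    have "x c = (\<Sum>i<d. if i = c then v $ c else 0)"
      unfolding x_def using N_id that by (intro sum.cong) auto
    then show ?thesis using that by simp
  qed
  then have "v = 0\<^sub>v d"
    using v(1) x_zero m by (intro eq_vecI) auto
  with v(2) show False ..
qed

theorem mainTheorem6:
  fixes A :: "int poly" and d m w p :: nat and N :: "rat mat"
  assumes "degree A = d" and "d \<ge> 1" and "coeff A 0 \<noteq> 0" and "m > d"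
    and "dim_row N = d" and "dim_col N = m"
    and "\<forall>i<d. \<forall>j<d. N $$ (i, j) = (if i = j then 1 else 0)"
    and "\<forall>i<d. \<forall>j<m - d. (\<Sum>k\<le>d. of_int (coeff A k) * N $$ (i, j + k)) = 0"
    and "prime p" and "newton_vertex p A w"
  shows "det (mat d d (\<lambda>(i, j). N $$ (i, if j < w then j else m - d + j))) \<noteq> 0
       \<and> det (mat (m - d) (m - d) (\<lambda>(i, j).
            if int w + int i - int j \<ge> 0 then coeff A (nat (int w + int i - int j)) else 0)) \<noteq> 0"
proof
  have U: "det (coeff_toeplitz_mat A w (m - d)) \<noteq> 0"
    using det_coeff_toeplitz_mat_ne_zero assms(9,10) .
  then show "det (mat (m - d) (m - d) (\<lambda>(i, j).
      if int w + int i - int j \<ge> 0 then coeff A (nat (int w + int i - int j)) else 0)) \<noteq> 0"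
    by (simp add: coeff_toeplitz_mat_def)
  let ?A = "map_poly rat_of_int A"
  have "det (coeff_toeplitz_mat ?A w (m - d)) \<noteq> 0"
    using U by (simp add: coeff_toeplitz_mat_map_poly of_int_hom.hom_det)
  moreover have "degree ?A = d" and "w \<le> d"
    using assms(1,10) by (simp_all add: degree_map_poly newton_vertex_def)
  ultimately show "det (mat d d (\<lambda>(i, j). N $$ (i, if j < w then j else m - d + j))) \<noteq> 0"
    using assms(4,7,8) by (intro det_window_columns_ne_zero[of ?A]) (auto simp: coeff_map_poly)
qed

end
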